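(* Let $\mathcal{C}_1$ be an $(n,k,d)$ binary linear code. Then the code $\mathcal{C}_2 = \{(u,u) : u \in \mathcal{C}_1\}$ is a $(2n,k,2d)$ code with $$\rho(\mathcal{C}_2) \le \rho(\mathcal{C}_1) + n.$$
   Context: An $(n,k,d)$ code is a linear code of length $n$, dimension $k$ and minimum Hamming distance $d$. A parity-check matrix for a linear code $\mathcal{C}$ is any matrix (possibly with linearly dependent rows) whose rows span $\mathcal{C}^\perp$. For a parity-check matrix $H$, the stopping distance $s(H)$ is the largest integer such that for every set of $s(H)-1$ or fewer columns of $H$, the projection of $H$ onto those columns contains at least one row of Hamming weight exactly one. The stopping redundancy $\rho(\mathcal{C})$ is the smallest number of rows of a parity-check matrix $H$ for $\mathcal{C}$ with $s(H) = d(\mathcal{C})$, the minimum distance of $\mathcal{C}$. *)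

theory Defs
  imports Main "HOL-Library.Z2"
begin

type_synonym bvec = "nat \<Rightarrow> bit"

definition bvecs :: "nat \<Rightarrow> bvec set" where
  "bvecs n = {x. \<forall>i. n \<le> i \<longrightarrow> x i = 0}"

definition zvec :: bvec where
  "zvec = (\<lambda>i. 0)"

definition vadd :: "bvec \<Rightarrow> bvec \<Rightarrow> bvec" where
  "vadd x y = (\<lambda>i. x i + y i)"

definition vscale :: "bit \<Rightarrow> bvec \<Rightarrow> bvec" where
  "vscale c x = (\<lambda>i. c * x i)"

definition weight :: "bvec \<Rightarrow> nat" where
  "weight x = card {i. x i \<noteq> 0}"

definition inner :: "nat \<Rightarrow> bvec \<Rightarrow> bvec \<Rightarrow> bit" where
  "inner n x y = (\<Sum>i<n. x i * y i)"

definition linear_code :: "nat \<Rightarrow> bvec set \<Rightarrow> bool" where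
  "linear_code n C \<longleftrightarrow> C \<subseteq> bvecs n \<and> zvec \<in> C \<and>
     (\<forall>x\<in>C. \<forall>y\<in>C. \<forall>a b. vadd (vscale a x) (vscale b y) \<in> C)"

definition lincomb :: "bvec set \<Rightarrow> (bvec \<Rightarrow> bit) \<Rightarrow> bvec" where
  "lincomb B c = (\<lambda>j. \<Sum>b\<in>B. c b * b j)"

definition lin_indep :: "bvec set \<Rightarrow> bool" where
  "lin_indep B \<longleftrightarrow> (\<forall>c. lincomb B c = zvec \<longrightarrow> (\<forall>b\<in>B. c b = 0))"

definition has_dim :: "bvec set \<Rightarrow> nat \<Rightarrow> bool" where
  "has_dim C k \<longleftrightarrow> (\<exists>B. finite B \<and> B \<subseteq> C \<and> card B = k \<and> lin_indep B \<and>
     (\<forall>x\<in>C. \<exists>c. x = lincomb B c))"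

text \<open>Minimum Hamming distance of a linear code = minimum nonzero weight.\<close>
definition min_dist :: "bvec set \<Rightarrow> nat" where
  "min_dist C = (LEAST w. \<exists>c\<in>C. c \<noteq> zvec \<and> weight c = w)"

text \<open>(n,k,d) binary linear code (d is a genuine minimum distance, so C contains
  a nonzero codeword).\<close>
definition is_code :: "nat \<Rightarrow> nat \<Rightarrow> nat \<Rightarrow> bvec set \<Rightarrow> bool" where
  "is_code n k d C \<longleftrightarrow> linear_code n C \<and> has_dim C k \<and>
     (\<exists>c\<in>C. c \<noteq> zvec) \<and> min_dist C = d"

definition dual_code :: "nat \<Rightarrow> bvec set \<Rightarrow> bvec set" where
  "dual_code n C = {y \<in> bvecs n. \<forall>x\<in>C. inner n x y = 0}"

definition row_span :: "bvec list \<Rightarrow> bvec set" where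
  "row_span H = {(\<lambda>j. \<Sum>i<length H. c i * (H ! i) j) | c. True}"

text \<open>Parity-check matrix (rows possibly dependent) for C: rows are length-n
  vectors spanning the dual code.\<close>
definition parity_check :: "nat \<Rightarrow> bvec set \<Rightarrow> bvec list \<Rightarrow> bool" where
  "parity_check n C H \<longleftrightarrow> set H \<subseteq> bvecs n \<and> row_span H = dual_code n C"

definition has_weight_one_row :: "bvec list \<Rightarrow> nat set \<Rightarrow> bool" where
  "has_weight_one_row H S \<longleftrightarrow> (\<exists>h\<in>set H. card {j\<in>S. h j \<noteq> 0} = 1)"

definition stop_dist :: "nat \<Rightarrow> bvec list \<Rightarrow> nat" where
  "stop_dist n H = (GREATEST s. \<forall>S. S \<subseteq> {..<n} \<and> S \<noteq> {} \<and> card S < s \<longrightarrow>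
       has_weight_one_row H S)"

definition stop_red :: "nat \<Rightarrow> bvec set \<Rightarrow> nat" where
  "stop_red n C = (LEAST m. \<exists>H. length H = m \<and> parity_check n C H \<and>
       stop_dist n H = min_dist C)"

definition uu_code :: "nat \<Rightarrow> bvec set \<Rightarrow> bvec set" where
  "uu_code n C = {(\<lambda>i. if i < n then u i else if i < 2*n then u (i - n) else 0) | u. u \<in> C}"

end

theory Submission
  imports Defs
begin

text \<open>Duplicating every codeword doubles all weights, so the (u,u) code has minimum distance 2d
  and the same dimension. Take a parity-check matrix H with s(H) = d and |H| = \<rho>(C), and append the
  n rows e_i + e_(n+i); together with H they span the dual of the (u,u) code. A nonempty set S of
  fewer than 2d columns either separates some pair {i, n+i}, and then the row e_i + e_(n+i) meets S
  exactly once, or it is the double of a nonempty set of fewer than d columns of the first half,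
  which some row of H meets exactly once. That a matrix with s(H) = d exists at all, so that \<rho>(C)
  is attained, follows from duality: if no nonzero codeword is supported in S, every pattern on S is
  the restriction of a dual codeword, so the list of all dual codewords is such a matrix.\<close>

section \<open>Annihilators in finite dimension\<close>

lemma annihilator_of_annihilator_in_span:
  fixes a :: "'l \<Rightarrow> 'b \<Rightarrow> 'a::field" and v :: "'b \<Rightarrow> 'a"
  assumes "finite B" and "finite T"
    and "\<And>z. \<forall>l\<in>T. (\<Sum>b\<in>B. z b * a l b) = 0 \<Longrightarrow> (\<Sum>b\<in>B. z b * v b) = 0"
  shows "\<exists>y. \<forall>b\<in>B. v b = (\<Sum>l\<in>T. y l * a l b)"
  using assms(2,3)
proof (induction T arbitrary: a v rule: finite_induct)
  case empty
  have "v b = 0" if "b \<in> B" for b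
    using empty[of "\<lambda>b'. if b' = b then 1 else 0"] that assms(1)
    by (simp add: if_distrib[of "\<lambda>c. c * _"] cong: if_cong)
  then show ?case by simp
next
  case (insert t T)
  show ?case
  proof (cases "\<forall>b\<in>B. a t b = 0")
    case True
    have "\<exists>y. \<forall>b\<in>B. v b = (\<Sum>l\<in>T. y l * a l b)"
      using insert.prems True by (intro insert.IH) auto
    then show ?thesis using True insert.hyps by auto
  next
    case False
    then obtain p where p: "p \<in> B" "a t p \<noteq> 0" by auto
    \<comment> \<open>Gaussian elimination at the pivot p: \<pi> kills a t and has adjoint dual, so the
      hypothesis passes to the vectors \<pi> (a l) for l \<in> T.\<close>
    define \<pi> where "\<pi> x b = x b - x p / a t p * a t b" for x :: "'b \<Rightarrow> 'a" and b
    define dual where "dual z b = z b - (if b = p then (\<Sum>b\<in>B. z b * a t b) / a t p else 0)"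
      for z :: "'b \<Rightarrow> 'a" and b
    have adjoint: "(\<Sum>b\<in>B. z b * \<pi> x b) = (\<Sum>b\<in>B. dual z b * x b)" for z x
    proof -
      have "(\<Sum>b\<in>B. z b * \<pi> x b) = (\<Sum>b\<in>B. z b * x b) - x p / a t p * (\<Sum>b\<in>B. z b * a t b)"
        by (simp add: \<pi>_def algebra_simps sum_subtractf sum_distrib_left)
      also have "\<dots> = (\<Sum>b\<in>B. dual z b * x b)"
        using p assms(1)
        by (simp add: dual_def left_diff_distrib sum_subtractf if_distrib[of "\<lambda>c. c * _"]
            cong: if_cong)
      finally show ?thesis .
    qed
    have \<pi>_pivot: "\<pi> (a t) b = 0" for b
      using p by (simp add: \<pi>_def)
    have \<pi>_sum: "\<pi> (\<lambda>b. \<Sum>l\<in>T. y l * a l b) b = (\<Sum>l\<in>T. y l * \<pi> (a l) b)" for y b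
      by (simp add: \<pi>_def algebra_simps sum_subtractf sum_distrib_left sum_distrib_right
          sum_divide_distrib)
    have "\<exists>y. \<forall>b\<in>B. \<pi> v b = (\<Sum>l\<in>T. y l * \<pi> (a l) b)"
    proof (rule insert.IH)
      fix z assume "\<forall>l\<in>T. (\<Sum>b\<in>B. z b * \<pi> (a l) b) = 0"
      then have "\<forall>l\<in>insert t T. (\<Sum>b\<in>B. dual z b * a l b) = 0"
        using \<pi>_pivot by (simp add: adjoint[symmetric])
      then show "(\<Sum>b\<in>B. z b * \<pi> v b) = 0"
        by (simp add: adjoint insert.prems)
    qed
    then obtain y where y: "\<forall>b\<in>B. \<pi> v b = (\<Sum>l\<in>T. y l * \<pi> (a l) b)" ..
    define w where "w b = (\<Sum>l\<in>T. y l * a l b)" for b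
    define q where "q = (v p - w p) / a t p"
    have "(\<Sum>l\<in>T. (y(t := q)) l * a l b) = w b" for b
      unfolding w_def using insert.hyps by (intro sum.cong) auto
    then have "(\<Sum>l\<in>insert t T. (y(t := q)) l * a l b) = q * a t b + w b" for b
      using insert.hyps by simp
    moreover have "v b = q * a t b + w b" if "b \<in> B" for b
      using y[rule_format, OF that] \<pi>_sum[of y b, folded w_def]
      by (simp add: \<pi>_def q_def algebra_simps diff_divide_distrib)
    ultimately have "\<forall>b\<in>B. v b = (\<Sum>l\<in>insert t T. (y(t := q)) l * a l b)" by simp
    then show ?thesis by blast
  qed
qed

section \<open>Binary vectors, codes and duals\<close>

declare add_bit_eq_xor [simp del] mult_bit_eq_and [simp del]
  \<comment> \<open>keep sums over GF(2) as ring sums rather than parities of cardinalities\<close>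

lemma zvec_apply [simp]: "zvec i = 0"
  by (simp add: zvec_def)

lemma bvecs_nonzero_less: "x \<in> bvecs n \<Longrightarrow> x i \<noteq> 0 \<Longrightarrow> i < n"
  by (cases "i < n") (auto simp: bvecs_def)

lemma finite_bvecs: "finite (bvecs n)"
proof -
  have "bvecs n \<subseteq> (\<lambda>S i. if i \<in> S then 1 else 0) ` Pow {..<n}"
  proof
    fix x assume x: "x \<in> bvecs n"
    have "x = (\<lambda>i. if i \<in> {i. i < n \<and> x i = 1} then 1 else 0)"
      using x by (auto simp: fun_eq_iff bvecs_def)
    then show "x \<in> (\<lambda>S i. if i \<in> S then 1 else 0) ` Pow {..<n}" by blast
  qed
  then show ?thesis by (rule finite_subset) simp
qed

lemma linear_code_sum_closed:
  assumes "linear_code n D" and "finite I" and "\<forall>i\<in>I. f i \<in> D"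
  shows "(\<lambda>j. \<Sum>i\<in>I. c i * f i j) \<in> D"
  using assms(2,3)
proof (induction I rule: finite_induct)
  case empty
  then show ?case using assms(1) by (simp add: linear_code_def zvec_def)
next
  case (insert i I)
  have "(\<lambda>j. \<Sum>i\<in>insert i I. c i * f i j)
      = vadd (vscale (c i) (f i)) (vscale 1 (\<lambda>j. \<Sum>i\<in>I. c i * f i j))"
    using insert.hyps by (simp add: vadd_def vscale_def)
  then show ?case using assms(1) insert by (simp add: linear_code_def)
qed

lemma linear_code_dual_code: "linear_code n (dual_code n C)"
proof -
  have "inner n x (vadd (vscale a y) (vscale b z)) = a * inner n x y + b * inner n x z" for a b x y z
    by (simp add: inner_def vadd_def vscale_def sum.distrib sum_distrib_left algebra_simps)
  then show ?thesis
    by (auto simp: linear_code_def dual_code_def bvecs_def inner_def vadd_def vscale_def)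
qed

lemma set_subset_row_span: "set H \<subseteq> row_span H"
proof
  fix h assume "h \<in> set H"
  then obtain i where i: "i < length H" "h = H ! i" by (auto simp: in_set_conv_nth)
  then have "h = (\<lambda>j. \<Sum>i'<length H. (if i' = i then 1 else 0) * (H ! i') j)"
    by (simp add: if_distrib[of "\<lambda>c. c * _"] cong: if_cong)
  then show "h \<in> row_span H"
    unfolding row_span_def by (intro CollectI exI[of _ "\<lambda>i'. if i' = i then 1 else 0"]) simp
qed

lemma row_span_subset: "linear_code n D \<Longrightarrow> set H \<subseteq> D \<Longrightarrow> row_span H \<subseteq> D"
  unfolding row_span_def by (auto intro!: linear_code_sum_closed)

lemma sum_lessThan_add: "(\<Sum>i<a + b. f i) = (\<Sum>i<a. f i) + (\<Sum>i<b. f (a + i))"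
  for f :: "nat \<Rightarrow> 'a::comm_monoid_add"
  by (induction b) (simp_all add: add.assoc)

lemma row_span_append:
  assumes "x \<in> row_span H" and "y \<in> row_span G"
  shows "vadd x y \<in> row_span (H @ G)"
proof -
  obtain a b where x: "x = (\<lambda>j. \<Sum>i<length H. a i * (H ! i) j)"
    and y: "y = (\<lambda>j. \<Sum>i<length G. b i * (G ! i) j)"
    using assms unfolding row_span_def by blast
  define c where "c i = (if i < length H then a i else b (i - length H))" for i
  have "vadd x y = (\<lambda>j. \<Sum>i<length (H @ G). c i * ((H @ G) ! i) j)"
    by (simp add: x y c_def vadd_def nth_append sum_lessThan_add)
  then show ?thesis unfolding row_span_def by (intro CollectI exI[of _ c]) simp
qed

lemma parity_check_dual_code_list:
  assumes "set H = dual_code n C"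
  shows "parity_check n C H"
proof -
  have "row_span H \<subseteq> dual_code n C"
    using assms by (intro row_span_subset[OF linear_code_dual_code]) simp
  moreover have "dual_code n C \<subseteq> row_span H"
    using assms set_subset_row_span by blast
  ultimately show ?thesis
    using assms by (auto simp: parity_check_def dual_code_def)
qed

lemma min_dist_le_weight:
  assumes "c \<in> C" and "c \<noteq> zvec"
  shows "min_dist C \<le> weight c"
proof -
  have "\<exists>c'\<in>C. c' \<noteq> zvec \<and> weight c' = weight c" using assms by blast
  then show ?thesis unfolding min_dist_def by (rule Least_le)
qed

lemma min_dist_attained:
  assumes "\<exists>c\<in>C. c \<noteq> zvec"
  shows "\<exists>c\<in>C. c \<noteq> zvec \<and> weight c = min_dist C"
proof -
  have "\<exists>w. \<exists>c\<in>C. c \<noteq> zvec \<and> weight c = w" using assms by blast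
  then show ?thesis unfolding min_dist_def by (rule LeastI_ex)
qed

section \<open>Stopping distance\<close>

definition weight_one_below :: "nat \<Rightarrow> bvec list \<Rightarrow> nat \<Rightarrow> bool" where
  "weight_one_below n H s \<longleftrightarrow>
     (\<forall>S. S \<subseteq> {..<n} \<and> S \<noteq> {} \<and> card S < s \<longrightarrow> has_weight_one_row H S)"

lemma weight_one_below_mono: "weight_one_below n H s \<Longrightarrow> s' \<le> s \<Longrightarrow> weight_one_below n H s'"
  unfolding weight_one_below_def by auto

lemma card_common_support_orthogonal_ne_1:
  assumes "c \<in> bvecs n" and "inner n c h = 0"
  shows "card {j. c j \<noteq> 0 \<and> h j \<noteq> 0} \<noteq> 1"
proof
  assume "card {j. c j \<noteq> 0 \<and> h j \<noteq> 0} = 1"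
  then obtain j where j: "{j. c j \<noteq> 0 \<and> h j \<noteq> 0} = {j}" by (auto simp: card_Suc_eq)
  then have cj: "c j = 1" "h j = 1" by (simp_all add: set_eq_iff, blast+)
  from j have supp: "i = j" if "c i \<noteq> 0" "h i \<noteq> 0" for i using that by blast
  have "j < n" using bvecs_nonzero_less[OF assms(1)] cj by simp
  have "inner n c h = (\<Sum>i\<in>{j}. c i * h i)"
    unfolding inner_def using \<open>j < n\<close> supp
    by (intro sum.mono_neutral_right) (auto, metis bit_not_one_iff)
  with cj assms(2) show False by simp
qed

lemma not_weight_one_below_Suc_weight:
  assumes "parity_check n C H" and "C \<subseteq> bvecs n" and "c \<in> C" and "c \<noteq> zvec"
  shows "\<not> weight_one_below n H (Suc (weight c))"
proof
  let ?S = "{j. c j \<noteq> 0}"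
  assume "weight_one_below n H (Suc (weight c))"
  moreover have "?S \<subseteq> {..<n}" using assms(2,3) bvecs_nonzero_less by blast
  moreover have "?S \<noteq> {}" using assms(4) by (auto simp: zvec_def fun_eq_iff)
  ultimately have "has_weight_one_row H ?S"
    unfolding weight_one_below_def weight_def by blast
  then obtain h where "h \<in> set H" and h: "card {j \<in> ?S. h j \<noteq> 0} = 1"
    unfolding has_weight_one_row_def by blast
  then have "inner n c h = 0"
    using assms(1,3) set_subset_row_span unfolding parity_check_def dual_code_def by blast
  with h show False
    using card_common_support_orthogonal_ne_1 assms(2,3) by auto
qed

lemma weight_one_below_le_weight:
  assumes "parity_check n C H" and "C \<subseteq> bvecs n" and "c \<in> C" and "c \<noteq> zvec"
    and "weight_one_below n H s"
  shows "s \<le> weight c"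
  using not_weight_one_below_Suc_weight[OF assms(1-4)] weight_one_below_mono[OF assms(5)]
  by (meson not_less_eq_eq)

lemma weight_one_below_iff_le_stop_dist:
  assumes "parity_check n C H" and "C \<subseteq> bvecs n" and "c \<in> C" and "c \<noteq> zvec"
  shows "weight_one_below n H s \<longleftrightarrow> s \<le> stop_dist n H"
proof -
  have stop_dist: "stop_dist n H = Greatest (weight_one_below n H)"
    by (simp add: stop_dist_def weight_one_below_def[abs_def])
  \<comment> \<open>GREATEST is junk for an unbounded predicate; the nonzero codeword c bounds it.\<close>
  have bounded: "\<forall>s. weight_one_below n H s \<longrightarrow> s \<le> weight c"
    using weight_one_below_le_weight[OF assms] by blast
  have "weight_one_below n H 0" by (simp add: weight_one_below_def)
  then have "weight_one_below n H (stop_dist n H)"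
    unfolding stop_dist using bounded by (blast intro: GreatestI_nat)
  moreover have "weight_one_below n H s \<Longrightarrow> s \<le> stop_dist n H"
    unfolding stop_dist using bounded by (blast intro: Greatest_le_nat)
  ultimately show ?thesis using weight_one_below_mono by blast
qed

lemma stop_dist_eq_min_dist_iff:
  assumes "parity_check n C H" and "C \<subseteq> bvecs n" and "\<exists>c\<in>C. c \<noteq> zvec"
  shows "stop_dist n H = min_dist C \<longleftrightarrow> weight_one_below n H (min_dist C)"
proof -
  obtain c where c: "c \<in> C" "c \<noteq> zvec" "weight c = min_dist C"
    using min_dist_attained[OF assms(3)] by blast
  note iff = weight_one_below_iff_le_stop_dist[OF assms(1,2) c(1,2)]
  have "stop_dist n H \<le> min_dist C"
    using weight_one_below_le_weight[OF assms(1,2) c(1,2)] iff c(3) by simp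
  then show ?thesis unfolding iff by linarith
qed

lemma dual_code_unit_on_support_free_set:
  assumes lin: "linear_code n C" and S: "S \<subseteq> {..<n}" "j \<in> S"
    and free: "\<And>c. c \<in> C \<Longrightarrow> {i. c i \<noteq> 0} \<subseteq> S \<Longrightarrow> c = zvec"
  shows "\<exists>y\<in>dual_code n C. \<forall>l\<in>S. y l = (if l = j then 1 else 0)"
proof -
  have Cb: "C \<subseteq> bvecs n" using lin by (simp add: linear_code_def)
  then have "finite C" using finite_bvecs finite_subset by blast
  define T where "T = {..<n} - S"
  \<comment> \<open>On C, the functional c \<mapsto> c j vanishes wherever all c \<mapsto> c l with l \<in> T do,
    because a codeword vanishing on T is supported in S; so it is a combination of them.\<close>
  have "\<exists>y. \<forall>c\<in>C. c j = (\<Sum>l\<in>T. y l * c l)"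
  proof (rule annihilator_of_annihilator_in_span[where a = "\<lambda>l c. c l"])
    fix z assume z: "\<forall>l\<in>T. (\<Sum>c\<in>C. z c * c l) = 0"
    define u where "u l = (\<Sum>c\<in>C. z c * c l)" for l
    have "u \<in> C"
      unfolding u_def[abs_def] using lin \<open>finite C\<close> by (rule linear_code_sum_closed) simp
    moreover have "{i. u i \<noteq> 0} \<subseteq> S"
    proof
      fix i assume i: "i \<in> {i. u i \<noteq> 0}"
      then have "i < n" using bvecs_nonzero_less \<open>u \<in> C\<close> Cb by blast
      moreover have "i \<notin> T" using z i by (auto simp: u_def)
      ultimately show "i \<in> S" by (simp add: T_def)
    qed
    ultimately have "u = zvec" by (rule free)
    then show "(\<Sum>c\<in>C. z c * c j) = 0" by (simp add: u_def[symmetric])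
  qed (use \<open>finite C\<close> T_def in simp_all)
  then obtain y0 where y0: "\<forall>c\<in>C. c j = (\<Sum>l\<in>T. y0 l * c l)" ..
  define y where "y l = (if l \<in> S then (if l = j then 1 else 0) else if l < n then y0 l else 0)" for l
  have "inner n c y = 0" if "c \<in> C" for c
  proof -
    have "inner n c y = (\<Sum>l\<in>T. c l * y l) + (\<Sum>l\<in>S. c l * y l)"
      unfolding inner_def T_def using S(1) by (rule sum.subset_diff) simp
    also have "(\<Sum>l\<in>S. c l * y l) = c j"
      using S finite_subset[OF S(1)]
      by (simp add: y_def if_distrib[of "\<lambda>x. _ * x"] cong: if_cong)
    also have "(\<Sum>l\<in>T. c l * y l) = (\<Sum>l\<in>T. y0 l * c l)"
      by (rule sum.cong) (auto simp: T_def y_def)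
    also have "\<dots> = c j" using y0 that by simp
    finally show ?thesis by simp
  qed
  moreover have "y \<in> bvecs n" using S(1) by (auto simp: bvecs_def y_def)
  ultimately have "y \<in> dual_code n C" by (simp add: dual_code_def)
  then show ?thesis by (intro bexI[of _ y]) (simp_all add: y_def)
qed

lemma weight_one_below_dual_code_list:
  assumes "linear_code n C" and "set H = dual_code n C"
  shows "weight_one_below n H (min_dist C)"
  unfolding weight_one_below_def
proof (intro allI impI)
  fix S assume S: "S \<subseteq> {..<n} \<and> S \<noteq> {} \<and> card S < min_dist C"
  then obtain j where "j \<in> S" by blast
  have "c = zvec" if "c \<in> C" "{i. c i \<noteq> 0} \<subseteq> S" for c
  proof (rule ccontr)
    assume "c \<noteq> zvec"
    with that(1) have "min_dist C \<le> weight c" by (rule min_dist_le_weight)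
    also have "weight c \<le> card S"
      unfolding weight_def using S that(2) by (intro card_mono) (auto intro: finite_subset)
    finally show False using S by simp
  qed
  then obtain y where "y \<in> dual_code n C" and y: "\<forall>l\<in>S. y l = (if l = j then 1 else 0)"
    using dual_code_unit_on_support_free_set[OF assms(1) _ \<open>j \<in> S\<close>] S by blast
  moreover have "{l \<in> S. y l \<noteq> 0} = {j}" using y \<open>j \<in> S\<close> by (auto split: if_splits)
  ultimately show "has_weight_one_row H S"
    unfolding has_weight_one_row_def using assms(2) by (intro bexI[of _ y]) simp_all
qed

lemma stop_red_attained:
  assumes "linear_code n C" and "\<exists>c\<in>C. c \<noteq> zvec"
  shows "\<exists>H. length H = stop_red n C \<and> parity_check n C H \<and> stop_dist n H = min_dist C"
proof -
  have "finite (dual_code n C)"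
    using finite_bvecs by (rule finite_subset[rotated]) (auto simp: dual_code_def)
  then obtain H where H: "set H = dual_code n C" using finite_list by blast
  have "C \<subseteq> bvecs n" using assms(1) by (simp add: linear_code_def)
  moreover have "parity_check n C H" using H by (rule parity_check_dual_code_list)
  ultimately have "stop_dist n H = min_dist C"
    using stop_dist_eq_min_dist_iff assms(2) weight_one_below_dual_code_list[OF assms(1) H] by simp
  with \<open>parity_check n C H\<close>
  have "\<exists>m H. length H = m \<and> parity_check n C H \<and> stop_dist n H = min_dist C" by blast
  then show ?thesis unfolding stop_red_def by (rule LeastI_ex)
qed

lemma stop_red_le_length:
  assumes "parity_check n C H" and "stop_dist n H = min_dist C"
  shows "stop_red n C \<le> length H"
  unfolding stop_red_def by (rule Least_le, rule exI[of _ H]) (simp add: assms)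

section \<open>The (u,u) construction\<close>

definition uu_vec :: "nat \<Rightarrow> bvec \<Rightarrow> bvec" where
  "uu_vec n u = (\<lambda>i. if i < n then u i else if i < 2 * n then u (i - n) else 0)"

lemma uu_code_eq_image: "uu_code n C = uu_vec n ` C"
  by (auto simp: uu_code_def uu_vec_def)

lemma uu_vec_apply_low [simp]: "i < n \<Longrightarrow> uu_vec n u i = u i"
  by (simp add: uu_vec_def)

lemma uu_vec_apply_high [simp]: "i < n \<Longrightarrow> uu_vec n u (n + i) = u i"
  by (simp add: uu_vec_def)

lemma uu_vec_in_bvecs: "uu_vec n u \<in> bvecs (2 * n)"
  by (simp add: uu_vec_def bvecs_def)

lemma uu_vec_sum: "uu_vec n (\<lambda>j. \<Sum>b\<in>B. g b * f b j) = (\<lambda>j. \<Sum>b\<in>B. g b * uu_vec n (f b) j)"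
  by (simp add: uu_vec_def fun_eq_iff)

lemma uu_vec_zvec: "uu_vec n zvec = zvec"
  by (simp add: uu_vec_def fun_eq_iff)

lemma uu_vec_vadd_vscale:
  "uu_vec n (vadd (vscale a x) (vscale b y)) = vadd (vscale a (uu_vec n x)) (vscale b (uu_vec n y))"
  by (simp add: uu_vec_def vadd_def vscale_def fun_eq_iff)

lemma inj_on_uu_vec: "inj_on (uu_vec n) (bvecs n)"
proof
  fix x y assume "x \<in> bvecs n" "y \<in> bvecs n" and eq: "uu_vec n x = uu_vec n y"
  show "x = y"
  proof
    fix i show "x i = y i"
      using fun_cong[OF eq, of i] \<open>x \<in> bvecs n\<close> \<open>y \<in> bvecs n\<close>
      by (cases "i < n") (simp_all add: bvecs_def)
  qed
qed

lemma uu_vec_eq_zvec_iff: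
  assumes "u \<in> bvecs n"
  shows "uu_vec n u = zvec \<longleftrightarrow> u = zvec"
proof -
  have "zvec \<in> bvecs n" by (simp add: bvecs_def)
  then show ?thesis
    using inj_onD[OF inj_on_uu_vec _ assms] uu_vec_zvec by metis
qed

lemma lincomb_in_bvecs:
  assumes "B \<subseteq> bvecs n"
  shows "lincomb B c \<in> bvecs n"
proof -
  have "(\<Sum>b\<in>B. c b * b i) = 0" if "n \<le> i" for i
    using that assms by (intro sum.neutral) (auto simp: bvecs_def)
  then show ?thesis by (simp add: lincomb_def bvecs_def)
qed

lemma card_Un_image_shift:
  fixes n :: nat
  assumes "A \<subseteq> {..<n}"
  shows "card (A \<union> (+) n ` A) = 2 * card A"
proof -
  have "finite A" using assms finite_subset by blast
  moreover have "A \<inter> (+) n ` A = {}" using assms by (auto simp: subset_iff)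
  ultimately have "card (A \<union> (+) n ` A) = card A + card ((+) n ` A)"
    by (intro card_Un_disjoint) simp_all
  also have "card ((+) n ` A) = card A" by (rule card_image) simp
  finally show ?thesis by simp
qed

lemma weight_uu_vec:
  assumes "u \<in> bvecs n"
  shows "weight (uu_vec n u) = 2 * weight u"
proof -
  let ?A = "{i. u i \<noteq> 0}"
  have A: "?A \<subseteq> {..<n}" using assms bvecs_nonzero_less by blast
  have "{i. uu_vec n u i \<noteq> 0} = ?A \<union> (+) n ` ?A"
  proof (rule set_eqI)
    fix i
    show "i \<in> {i. uu_vec n u i \<noteq> 0} \<longleftrightarrow> i \<in> ?A \<union> (+) n ` ?A"
    proof (cases "i < n")
      case True
      then show ?thesis using A by (auto simp: uu_vec_def)
    next
      case False
      then have "i \<in> (+) n ` ?A \<longleftrightarrow> i < 2 * n \<and> u (i - n) \<noteq> 0"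
        using A by (auto simp: image_iff intro!: bexI[of _ "i - n"])
      then show ?thesis using False assms by (auto simp: uu_vec_def bvecs_def)
    qed
  qed
  then show ?thesis unfolding weight_def using card_Un_image_shift[OF A] by simp
qed

lemma linear_code_uu_code:
  assumes "linear_code n C"
  shows "linear_code (2 * n) (uu_code n C)"
  unfolding linear_code_def uu_code_eq_image
proof (intro conjI ballI allI)
  show "uu_vec n ` C \<subseteq> bvecs (2 * n)" using uu_vec_in_bvecs by blast
  show "zvec \<in> uu_vec n ` C" using assms uu_vec_zvec by (metis image_eqI linear_code_def)
  fix x y a b assume "x \<in> uu_vec n ` C" "y \<in> uu_vec n ` C"
  then obtain u v where "u \<in> C" "v \<in> C" "x = uu_vec n u" "y = uu_vec n v" by blast
  then show "vadd (vscale a x) (vscale b y) \<in> uu_vec n ` C"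
    using assms uu_vec_vadd_vscale by (metis image_eqI linear_code_def)
qed

lemma lincomb_image_uu_vec:
  assumes "inj_on (uu_vec n) B"
  shows "lincomb (uu_vec n ` B) c = uu_vec n (lincomb B (c \<circ> uu_vec n))"
  using assms by (simp add: lincomb_def sum.reindex uu_vec_sum)

lemma has_dim_uu_code:
  assumes "C \<subseteq> bvecs n" and "has_dim C k"
  shows "has_dim (uu_code n C) k"
proof -
  obtain B where B: "finite B" "B \<subseteq> C" "card B = k" "lin_indep B" "\<forall>x\<in>C. \<exists>c. x = lincomb B c"
    using assms(2) unfolding has_dim_def by blast
  have Bb: "B \<subseteq> bvecs n" using B(2) assms(1) by blast
  have inj: "inj_on (uu_vec n) B" using inj_on_uu_vec Bb by (rule inj_on_subset)
  have "lin_indep (uu_vec n ` B)"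
    unfolding lin_indep_def
  proof (intro allI impI ballI)
    fix c w assume "lincomb (uu_vec n ` B) c = zvec" and w: "w \<in> uu_vec n ` B"
    then have "lincomb B (c \<circ> uu_vec n) = zvec"
      using lincomb_image_uu_vec[OF inj] uu_vec_eq_zvec_iff lincomb_in_bvecs[OF Bb] by metis
    then show "c w = 0" using B(4) w unfolding lin_indep_def by auto
  qed
  moreover have "\<exists>c. x = lincomb (uu_vec n ` B) c" if "x \<in> uu_vec n ` C" for x
  proof -
    obtain u c where "x = uu_vec n u" "u = lincomb B c" using \<open>x \<in> uu_vec n ` C\<close> B(5) by blast
    moreover have "lincomb B (c \<circ> inv_into B (uu_vec n) \<circ> uu_vec n) = lincomb B c"
      unfolding lincomb_def using inj by (auto intro!: sum.cong)
    ultimately show ?thesis using lincomb_image_uu_vec[OF inj] by metis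
  qed
  ultimately show ?thesis
    unfolding has_dim_def uu_code_eq_image using B inj card_image
    by (intro exI[of _ "uu_vec n ` B"]) auto
qed

lemma uu_code_has_nonzero:
  assumes "C \<subseteq> bvecs n" and "\<exists>c\<in>C. c \<noteq> zvec"
  shows "\<exists>c\<in>uu_code n C. c \<noteq> zvec"
proof -
  obtain c where "c \<in> C" "c \<noteq> zvec" using assms(2) by blast
  moreover have "c \<in> bvecs n" using \<open>c \<in> C\<close> assms(1) by blast
  ultimately show ?thesis
    unfolding uu_code_eq_image using uu_vec_eq_zvec_iff by blast
qed

lemma min_dist_uu_code:
  assumes "C \<subseteq> bvecs n" and "\<exists>c\<in>C. c \<noteq> zvec"
  shows "min_dist (uu_code n C) = 2 * min_dist C"
proof (rule antisym)
  obtain c where c: "c \<in> C" "c \<noteq> zvec" "weight c = min_dist C"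
    using min_dist_attained[OF assms(2)] by blast
  then have "uu_vec n c \<in> uu_code n C" "uu_vec n c \<noteq> zvec"
    using assms(1) uu_vec_eq_zvec_iff by (auto simp: uu_code_eq_image)
  then have "min_dist (uu_code n C) \<le> weight (uu_vec n c)" by (rule min_dist_le_weight)
  then show "min_dist (uu_code n C) \<le> 2 * min_dist C"
    using c assms(1) weight_uu_vec by auto
next
  obtain u where u: "u \<in> C" "uu_vec n u \<noteq> zvec" "weight (uu_vec n u) = min_dist (uu_code n C)"
    using min_dist_attained[OF uu_code_has_nonzero[OF assms]] unfolding uu_code_eq_image by blast
  then have "min_dist C \<le> weight u" using uu_vec_zvec by (intro min_dist_le_weight) auto
  then show "2 * min_dist C \<le> min_dist (uu_code n C)"
    using u assms(1) weight_uu_vec by auto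
qed

lemma is_code_uu_code:
  assumes "is_code n k d C"
  shows "is_code (2 * n) k (2 * d) (uu_code n C)"
proof -
  have lin: "linear_code n C" and Cb: "C \<subseteq> bvecs n" and nz: "\<exists>c\<in>C. c \<noteq> zvec"
    using assms by (auto simp: is_code_def linear_code_def)
  show ?thesis
    using assms uu_code_has_nonzero[OF Cb nz] linear_code_uu_code[OF lin] has_dim_uu_code[OF Cb]
      min_dist_uu_code[OF Cb nz]
    by (simp add: is_code_def)
qed

section \<open>A parity-check matrix for the (u,u) code\<close>

definition twin_check :: "nat \<Rightarrow> nat \<Rightarrow> bvec" where
  "twin_check n i = (\<lambda>l. if l = i \<or> l = n + i then 1 else 0)"

definition uu_parity_check :: "nat \<Rightarrow> bvec list \<Rightarrow> bvec list" where
  "uu_parity_check n H = H @ map (twin_check n) [0..<n]"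

lemma inner_uu_vec:
  assumes "h \<in> bvecs n"
  shows "inner (2 * n) (uu_vec n u) h = inner n u h"
proof -
  have "(\<Sum>l<n. uu_vec n u (n + l) * h (n + l)) = 0"
    using assms by (simp add: bvecs_def)
  then show ?thesis by (simp add: inner_def mult_2 sum_lessThan_add)
qed

lemma inner_uu_vec_twin_check:
  assumes "i < n"
  shows "inner (2 * n) (uu_vec n u) (twin_check n i) = 0"
proof -
  have "inner (2 * n) (uu_vec n u) (twin_check n i) = u i + u i"
    using assms
    by (simp add: inner_def mult_2 sum_lessThan_add twin_check_def if_distrib[of "\<lambda>x. _ * x"]
        cong: if_cong)
  then show ?thesis by simp
qed

lemma sum_twin_check:
  "(\<Sum>i<n. g i * twin_check n i j) = (if j < n then g j else if j < 2 * n then g (j - n) else 0)"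
proof -
  have "(\<Sum>i<n. g i * twin_check n i j)
      = (\<Sum>i<n. if i = (if j < n then j else j - n) \<and> j < 2 * n then g i else 0)"
    by (rule sum.cong) (auto simp: twin_check_def)
  then show ?thesis by auto
qed

lemma set_uu_parity_check_subset_dual:
  assumes "set H \<subseteq> dual_code n C"
  shows "set (uu_parity_check n H) \<subseteq> dual_code (2 * n) (uu_code n C)"
proof
  fix h assume "h \<in> set (uu_parity_check n H)"
  then consider "h \<in> set H" | i where "i < n" "h = twin_check n i"
    by (auto simp: uu_parity_check_def)
  then show "h \<in> dual_code (2 * n) (uu_code n C)"
  proof cases
    case 1
    then have "h \<in> bvecs n" "\<forall>u\<in>C. inner n u h = 0" using assms by (auto simp: dual_code_def)
    then show ?thesis by (auto simp: dual_code_def uu_code_eq_image inner_uu_vec bvecs_def)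
  next
    case 2
    moreover have "twin_check n i \<in> bvecs (2 * n)" using 2 by (auto simp: twin_check_def bvecs_def)
    ultimately show ?thesis by (auto simp: dual_code_def uu_code_eq_image inner_uu_vec_twin_check)
  qed
qed

lemma dual_uu_code_subset_row_span:
  assumes "dual_code n C \<subseteq> row_span H"
  shows "dual_code (2 * n) (uu_code n C) \<subseteq> row_span (uu_parity_check n H)"
proof
  fix y assume y: "y \<in> dual_code (2 * n) (uu_code n C)"
  define w where "w l = (if l < n then y l + y (n + l) else 0)" for l
  define t where "t j = (\<Sum>i<n. y (n + i) * twin_check n i j)" for j
  have "inner n u w = inner (2 * n) (uu_vec n u) y" for u
    by (simp add: inner_def w_def mult_2 sum_lessThan_add distrib_left sum.distrib)
  then have "w \<in> dual_code n C"
    using y by (auto simp: dual_code_def uu_code_eq_image bvecs_def w_def)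
  then have "w \<in> row_span H" using assms by blast
  moreover have "t \<in> row_span (map (twin_check n) [0..<n])"
    unfolding row_span_def t_def[abs_def] by (intro CollectI exI[of _ "\<lambda>i. y (n + i)"]) simp
  ultimately have "vadd w t \<in> row_span (uu_parity_check n H)"
    unfolding uu_parity_check_def by (rule row_span_append)
  moreover have "vadd w t = y"
    using y by (auto simp: vadd_def w_def t_def sum_twin_check dual_code_def bvecs_def fun_eq_iff)
  ultimately show "y \<in> row_span (uu_parity_check n H)" by simp
qed

lemma parity_check_uu_code:
  assumes "parity_check n C H"
  shows "parity_check (2 * n) (uu_code n C) (uu_parity_check n H)"
proof -
  have "set H \<subseteq> dual_code n C" using assms set_subset_row_span by (auto simp: parity_check_def)
  then have rows: "set (uu_parity_check n H) \<subseteq> dual_code (2 * n) (uu_code n C)"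
    by (rule set_uu_parity_check_subset_dual)
  have "dual_code n C \<subseteq> row_span H" using assms by (simp add: parity_check_def)
  then have "row_span (uu_parity_check n H) = dual_code (2 * n) (uu_code n C)"
    using row_span_subset[OF linear_code_dual_code rows] dual_uu_code_subset_row_span by blast
  moreover have "set (uu_parity_check n H) \<subseteq> bvecs (2 * n)" using rows by (auto simp: dual_code_def)
  ultimately show ?thesis by (simp add: parity_check_def)
qed

lemma eq_Un_image_shift_if_symmetric:
  fixes n :: nat
  assumes "S \<subseteq> {..<2 * n}" and "\<forall>i<n. i \<in> S \<longleftrightarrow> n + i \<in> S"
  shows "S = {i \<in> S. i < n} \<union> (+) n ` {i \<in> S. i < n}"
proof (rule set_eqI)
  fix j
  show "j \<in> S \<longleftrightarrow> j \<in> {i \<in> S. i < n} \<union> (+) n ` {i \<in> S. i < n}"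
  proof (cases "j < n")
    case False
    then have "j \<in> S \<longleftrightarrow> j - n \<in> S \<and> j - n < n" using assms by auto
    moreover have "j \<in> (+) n ` {i \<in> S. i < n} \<longleftrightarrow> j - n \<in> S \<and> j - n < n"
      using False by (auto simp: image_iff intro!: bexI[of _ "j - n"])
    ultimately show ?thesis using False by simp
  qed (use assms in auto)
qed

lemma weight_one_below_uu_parity_check:
  assumes "set H \<subseteq> bvecs n" and "weight_one_below n H d"
  shows "weight_one_below (2 * n) (uu_parity_check n H) (2 * d)"
  unfolding weight_one_below_def
proof (intro allI impI)
  fix S assume S: "S \<subseteq> {..<2 * n} \<and> S \<noteq> {} \<and> card S < 2 * d"
  show "has_weight_one_row (uu_parity_check n H) S"
  proof (cases "\<exists>i<n. (i \<in> S) \<noteq> (n + i \<in> S)")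
    case True
    then obtain i where i: "i < n" "(i \<in> S) \<noteq> (n + i \<in> S)" by blast
    have "{j \<in> S. twin_check n i j \<noteq> 0} = S \<inter> {i, n + i}" by (auto simp: twin_check_def)
    also have "\<dots> = (if i \<in> S then {i} else {n + i})" using i by auto
    finally have "card {j \<in> S. twin_check n i j \<noteq> 0} = 1" by simp
    moreover have "twin_check n i \<in> set (uu_parity_check n H)"
      using i by (simp add: uu_parity_check_def)
    ultimately show ?thesis unfolding has_weight_one_row_def by blast
  next
    case False
    define S1 where "S1 = {i \<in> S. i < n}"
    have S1: "S1 \<subseteq> {..<n}" by (auto simp: S1_def)
    have "S = S1 \<union> (+) n ` S1"
      unfolding S1_def using S False by (intro eq_Un_image_shift_if_symmetric) auto
    then have "S1 \<noteq> {}" and "card S1 < d"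
      using S card_Un_image_shift[OF S1] by auto
    then obtain h where h: "h \<in> set H" "card {j \<in> S1. h j \<noteq> 0} = 1"
      using assms(2) S1 unfolding weight_one_below_def has_weight_one_row_def by blast
    have "{j \<in> S. h j \<noteq> 0} = {j \<in> S1. h j \<noteq> 0}"
      using bvecs_nonzero_less h(1) assms(1) by (auto simp: S1_def)
    then show ?thesis
      unfolding has_weight_one_row_def uu_parity_check_def using h by (intro bexI[of _ h]) auto
  qed
qed

theorem theorem8:
  fixes n k d :: nat and C1 :: "bvec set"
  assumes "is_code n k d C1"
  shows "is_code (2*n) k (2*d) (uu_code n C1) \<and>
         stop_red (2*n) (uu_code n C1) \<le> stop_red n C1 + n"
proof -
  have lin: "linear_code n C1" and Cb: "C1 \<subseteq> bvecs n" and nz: "\<exists>c\<in>C1. c \<noteq> zvec"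
    and d: "min_dist C1 = d"
    using assms by (auto simp: is_code_def linear_code_def)
  have code2: "is_code (2 * n) k (2 * d) (uu_code n C1)" using assms by (rule is_code_uu_code)
  obtain H where H: "length H = stop_red n C1" "parity_check n C1 H" "stop_dist n H = d"
    using stop_red_attained[OF lin nz] d by blast
  have "weight_one_below n H d"
    using stop_dist_eq_min_dist_iff[OF H(2) Cb nz] H(3) d by simp
  then have "weight_one_below (2 * n) (uu_parity_check n H) (2 * d)"
    using H(2) by (intro weight_one_below_uu_parity_check) (auto simp: parity_check_def)
  moreover have pc2: "parity_check (2 * n) (uu_code n C1) (uu_parity_check n H)"
    using H(2) by (rule parity_check_uu_code)
  ultimately have "stop_dist (2 * n) (uu_parity_check n H) = min_dist (uu_code n C1)"
    using stop_dist_eq_min_dist_iff[OF pc2] code2 by (simp add: is_code_def linear_code_def)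
  then have "stop_red (2 * n) (uu_code n C1) \<le> length (uu_parity_check n H)"
    using pc2 by (rule stop_red_le_length[rotated])
  then show ?thesis using code2 H(1) by (simp add: uu_parity_check_def)
qed

end
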